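(* For any frame $L$, $\mathrm{LSC}(L)=\mathrm{F}(L)\cap\overline{\mathrm{LSC}}(L)$ and $\mathrm{USC}(L)=\mathrm{F}(L)\cap\overline{\mathrm{USC}}(L)$.
   Context: $\mathbb{Q}$ is the rationals. A sublocale of $L$ is a subset closed under arbitrary meets and such that $x\to s\in S$ for $x\in L$, $s\in S$; $\mathrm{coS}(L)$ is the frame of all sublocales ordered by reverse inclusion (bottom $0=L$, top $1=\{1\}$), with lattice operations and pseudocomplements $^\ast$ taken in $\mathrm{coS}(L)$. $\mathfrak{c}(a)=\{x\mid x\ge a\}$ is the closed sublocale of $a\in L$. The frame $\mathfrak{L}(\overline{\mathbb{IR}})$ is presented by generators $(r,\textsf{---})$, $(\textsf{---},s)$ ($r,s\in\mathbb{Q}$) subject to (r1) $(r,\textsf{---})\wedge(\textsf{---},s)=0$ whenever $r\ge s$; (r3) $(r,\textsf{---})=\bigvee_{s>r}(s,\textsf{---})$; (r4) $(\textsf{---},s)=\bigvee_{r<s}(\textsf{---},r)$; adding (r2) $(r,\textsf{---})\vee(\textsf{---},s)=1$ for $r<s$ gives the frame $\mathfrak{L}(\overline{\mathbb{R}})$, so frame homomorphisms $\mathfrak{L}(\overline{\mathbb{R}})\to M$ are identified with homomorphisms $\mathfrak{L}(\overline{\mathbb{IR}})\to M$ satisfying (r2). $\overline{\mathrm{F}}(L)$ is the set of homomorphisms $f\colon\mathfrak{L}(\overline{\mathbb{IR}})\to\mathrm{coS}(L)$ with $f(r,\textsf{---})^\ast\le f(\textsf{---},s)$ and $f(\textsf{---},s)^\ast\le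 f(r,\textsf{---})$ for $r<s$, ordered by $f\le g$ iff $f(r,\textsf{---})\le g(r,\textsf{---})$ and $g(\textsf{---},s)\le f(\textsf{---},s)$; it is a complete lattice with top $\boldsymbol{+\infty}$ ($(r,\textsf{---})\mapsto1$, $(\textsf{---},s)\mapsto0$) and bottom $\boldsymbol{-\infty}$ ($(r,\textsf{---})\mapsto0$, $(\textsf{---},s)\mapsto1$). $\mathrm{F}(L)$ is the set of real-valued $f\in\overline{\mathrm{F}}(L)$, i.e. such that for all $g\in\overline{\mathrm{F}}(L)$, $f\vee g=\boldsymbol{+\infty}\Rightarrow g=\boldsymbol{+\infty}$ and $f\wedge g=\boldsymbol{-\infty}\Rightarrow g=\boldsymbol{-\infty}$. $\overline{\mathrm{LSC}}(L)$ (resp. $\overline{\mathrm{USC}}(L)$) is the set of frame homomorphisms $g\colon\mathfrak{L}(\overline{\mathbb{R}})\to\mathrm{coS}(L)$ with $g(r,\textsf{---})$ closed for all $r$ (resp. $g(\textsf{---},s)$ closed for all $s$). $\mathrm{LSC}(L)$ is the set of frame homomorphisms $f\colon\mathfrak{L}(\overline{\mathbb{R}})\to\mathrm{coS}(L)$ with (l1) $f(r,\textsf{---})$ closed for all $r$, (l2) $\bigvee_r f(r,\textsf{---})=1$, (l3) $\bigwedge_r f(r,\textsf{---})=0$; $\mathrm{USC}(L)$ is defined analogously with $f(\textsf{---},s)$: (u1) $f(\textsf{---},s)$ closed, (u2) $\bigvee_s f(\textsf{---},s)=1$, (u3) $\bigwedge_s f(\textsf{---},s)=0$. All these sets are regarded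 as subsets of $\overline{\mathrm{F}}(L)$. *)

theory Defs
  imports Complex_Main
begin

definition is_frame :: "'a::complete_lattice itself \<Rightarrow> bool" where
  "is_frame _ \<longleftrightarrow> (\<forall>(a::'a) S. inf a (Sup S) = Sup ((inf a) ` S))"

definition himp :: "'a::complete_lattice \<Rightarrow> 'a \<Rightarrow> 'a" where
  "himp x s = Sup {z. inf z x \<le> s}"

section \<open>Sublocales and the frame coS(L) (elements are sets, ordered by reverse inclusion)\<close>

definition is_sublocale :: "'a::complete_lattice set \<Rightarrow> bool" where
  "is_sublocale S \<longleftrightarrow> (\<forall>T. T \<subseteq> S \<longrightarrow> Inf T \<in> S) \<and> (\<forall>x. \<forall>s\<in>S. himp x s \<in> S)"

definition coS_le :: "'a::complete_lattice set \<Rightarrow> 'a set \<Rightarrow> bool" where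
  "coS_le S T \<longleftrightarrow> T \<subseteq> S"

definition coS_bot :: "'a::complete_lattice set" where
  "coS_bot = UNIV"

definition coS_top :: "'a::complete_lattice set" where
  "coS_top = {top}"

definition coS_Sup :: "'a::complete_lattice set set \<Rightarrow> 'a set" where
  "coS_Sup A = \<Inter> A"

definition coS_join :: "'a::complete_lattice set \<Rightarrow> 'a set \<Rightarrow> 'a set" where
  "coS_join S T = coS_Sup {S, T}"

definition coS_Inf :: "'a::complete_lattice set set \<Rightarrow> 'a set" where
  "coS_Inf A = \<Inter> {U. is_sublocale U \<and> \<Union> A \<subseteq> U}"

definition coS_meet :: "'a::complete_lattice set \<Rightarrow> 'a set \<Rightarrow> 'a set" where
  "coS_meet S T = coS_Inf {S, T}"

definition coS_pc :: "'a::complete_lattice set \<Rightarrow> 'a set" where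
  "coS_pc S = coS_Sup {T. is_sublocale T \<and> coS_meet T S = coS_bot}"

definition closed_sub :: "'a::complete_lattice \<Rightarrow> 'a set" where
  "closed_sub a = {x. a \<le> x}"

definition is_closed_sub :: "'a::complete_lattice set \<Rightarrow> bool" where
  "is_closed_sub S \<longleftrightarrow> (\<exists>a. S = closed_sub a)"

text \<open>A frame homomorphism out of a frame given by generators and relations is the same as
  an assignment of the generators respecting the relations. A homomorphism
  f : L(IR-bar) \<rightarrow> coS(L) is thus represented by the pair (fst f, snd f), where
  fst f r = f(r,--) and snd f s = f(--,s).\<close>
type_synonym 'a rfun = "(rat \<Rightarrow> 'a set) \<times> (rat \<Rightarrow> 'a set)"

definition hom_IR :: "'a::complete_lattice rfun \<Rightarrow> bool" where
  "hom_IR f \<longleftrightarrow>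
     (\<forall>r. is_sublocale (fst f r)) \<and> (\<forall>s. is_sublocale (snd f s)) \<and>
     (\<forall>r s. s \<le> r \<longrightarrow> coS_meet (fst f r) (snd f s) = coS_bot) \<and>
     (\<forall>r. fst f r = coS_Sup {fst f s | s. r < s}) \<and>
     (\<forall>s. snd f s = coS_Sup {snd f r | r. r < s})"

definition hom_R :: "'a::complete_lattice rfun \<Rightarrow> bool" where
  "hom_R f \<longleftrightarrow> hom_IR f \<and> (\<forall>r s. r < s \<longrightarrow> coS_join (fst f r) (snd f s) = coS_top)"

definition Fbar :: "'a::complete_lattice rfun set" where
  "Fbar = {f. hom_IR f \<and>
     (\<forall>r s. r < s \<longrightarrow> coS_le (coS_pc (fst f r)) (snd f s) \<and> coS_le (coS_pc (snd f s)) (fst f r))}"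

definition Fle :: "'a::complete_lattice rfun \<Rightarrow> 'a rfun \<Rightarrow> bool" where
  "Fle f g \<longleftrightarrow> (\<forall>r. coS_le (fst f r) (fst g r)) \<and> (\<forall>s. coS_le (snd g s) (snd f s))"

definition plus_inf :: "'a::complete_lattice rfun" where
  "plus_inf = (\<lambda>r. coS_top, \<lambda>s. coS_bot)"

definition minus_inf :: "'a::complete_lattice rfun" where
  "minus_inf = (\<lambda>r. coS_bot, \<lambda>s. coS_top)"

definition is_Fjoin :: "'a::complete_lattice rfun \<Rightarrow> 'a rfun \<Rightarrow> 'a rfun \<Rightarrow> bool" where
  "is_Fjoin f g h \<longleftrightarrow> h \<in> Fbar \<and> Fle f h \<and> Fle g h \<and>
     (\<forall>k\<in>Fbar. Fle f k \<and> Fle g k \<longrightarrow> Fle h k)"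

definition is_Fmeet :: "'a::complete_lattice rfun \<Rightarrow> 'a rfun \<Rightarrow> 'a rfun \<Rightarrow> bool" where
  "is_Fmeet f g h \<longleftrightarrow> h \<in> Fbar \<and> Fle h f \<and> Fle h g \<and>
     (\<forall>k\<in>Fbar. Fle k f \<and> Fle k g \<longrightarrow> Fle k h)"

definition Freal :: "'a::complete_lattice rfun set" where
  "Freal = {f \<in> Fbar. \<forall>g\<in>Fbar.
     (is_Fjoin f g plus_inf \<longrightarrow> g = plus_inf) \<and> (is_Fmeet f g minus_inf \<longrightarrow> g = minus_inf)}"

definition LSCbar :: "'a::complete_lattice rfun set" where
  "LSCbar = {g. hom_R g \<and> (\<forall>r. is_closed_sub (fst g r))}"

definition USCbar :: "'a::complete_lattice rfun set" where
  "USCbar = {g. hom_R g \<and> (\<forall>s. is_closed_sub (snd g s))}"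

definition LSC :: "'a::complete_lattice rfun set" where
  "LSC = {f. hom_R f \<and> (\<forall>r. is_closed_sub (fst f r)) \<and>
     coS_Sup (range (fst f)) = coS_top \<and> coS_Inf (range (fst f)) = coS_bot}"

definition USC :: "'a::complete_lattice rfun set" where
  "USC = {f. hom_R f \<and> (\<forall>s. is_closed_sub (snd f s)) \<and>
     coS_Sup (range (snd f)) = coS_top \<and> coS_Inf (range (snd f)) = coS_bot}"

end

theory Submission
  imports Defs
begin

text \<open>
  Write an element of LSC-bar(L) as \<open>f(r,-) = c(a r)\<close>. By (r1) and (r2), \<open>f(-,s)\<close> lies
  between the open sublocales \<open>o(a s)\<close> and \<open>o(a r)\<close> for \<open>r < s\<close>; as \<open>c(a)\<close> and \<open>o(a)\<close> are
  complements in coS(L), this places \<open>f\<close> in F-bar(L). Real-valuedness of \<open>f\<close> then amounts to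
  (l2) and (l3). Given (l3) and \<open>f \<or> g = +\<infinity>\<close>, the pointwise upper bound of \<open>f\<close> and \<open>g\<close> is
  again in F-bar(L), so \<open>f(-,s) \<and> g(-,s) = 0\<close>; with \<open>o(a r) \<le> f(-,s)\<close> this gives
  \<open>g(-,s) \<le> c(a r) = f(r,-)\<close> for all \<open>r\<close>, whence \<open>g = +\<infinity>\<close> by (l3). Dually (l2) handles
  meets with \<open>-\<infinity>\<close>. Conversely, testing a real-valued \<open>f\<close> against the constant elements
  \<open>(o b, c b)\<close> with \<open>b = \<Squnion>\<^sub>r a r\<close>, and \<open>(V\<^sup>*\<^sup>*, V\<^sup>*)\<close> with \<open>V = \<Squnion>\<^sub>r o(a r)\<close> in coS(L), yields
  (l2) and (l3). Everything rests on coS(L) being a frame. The upper semicontinuous case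
  follows by the symmetry \<open>r \<mapsto> -r\<close>.
\<close>

section \<open>Sublocales and the lattice coS(L)\<close>

lemma himp_top_right: "himp x top = (top::'a::complete_lattice)"
  unfolding himp_def by (simp add: top_unique Sup_upper)

lemma le_himp: "(s::'a::complete_lattice) \<le> himp x s"
  unfolding himp_def by (simp add: Sup_upper le_infI1)

lemma sublocale_Inf: "is_sublocale S \<Longrightarrow> T \<subseteq> S \<Longrightarrow> Inf T \<in> S"
  unfolding is_sublocale_def by blast

lemma sublocale_top: "is_sublocale S \<Longrightarrow> top \<in> S"
  using sublocale_Inf[of S "{}"] by simp

lemma sublocale_inf: "is_sublocale S \<Longrightarrow> a \<in> S \<Longrightarrow> b \<in> S \<Longrightarrow> inf a b \<in> S"
  using sublocale_Inf[of S "{a, b}"] by simp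

lemma sublocale_himp: "is_sublocale S \<Longrightarrow> s \<in> S \<Longrightarrow> himp x s \<in> S"
  unfolding is_sublocale_def by blast

lemma sublocale_Inter: "(\<And>S. S \<in> SS \<Longrightarrow> is_sublocale S) \<Longrightarrow> is_sublocale (\<Inter> SS)"
  unfolding is_sublocale_def by blast

lemma sublocale_Int: "is_sublocale A \<Longrightarrow> is_sublocale B \<Longrightarrow> is_sublocale (A \<inter> B)"
  using sublocale_Inter[of "{A, B}"] by auto

lemma sublocale_UNIV: "is_sublocale UNIV"
  unfolding is_sublocale_def by blast

lemma sublocale_top_singleton: "is_sublocale {top}"
  unfolding is_sublocale_def by (auto simp: Inf_top_conv himp_top_right)

lemma sublocale_closed_sub: "is_sublocale (closed_sub a)"
  unfolding is_sublocale_def closed_sub_def by (auto intro: Inf_greatest order.trans[OF _ le_himp])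

lemma closed_sub_INT: "(\<Inter>i\<in>I. closed_sub (a i)) = closed_sub (Sup (a ` I))"
  unfolding closed_sub_def by (auto simp: SUP_le_iff)

lemma closed_sub_subset_iff: "closed_sub a \<subseteq> closed_sub b \<longleftrightarrow> b \<le> a"
  unfolding closed_sub_def by auto

lemma closed_sub_eq_top_iff: "closed_sub b = {top} \<longleftrightarrow> b = top"
  unfolding closed_sub_def by (auto simp: top_unique)

text \<open>In coS(L), ordered by reverse inclusion, \<open>sublocale_hull (S \<union> T)\<close> is the meet
  \<open>S \<and> T\<close>; so \<open>sublocale_hull (S \<union> T) = UNIV\<close> says \<open>S \<and> T = 0\<close>.\<close>
definition sublocale_hull :: "'a::complete_lattice set \<Rightarrow> 'a set" where
  "sublocale_hull X = \<Inter> {U. is_sublocale U \<and> X \<subseteq> U}"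

definition open_sub :: "'a::complete_lattice \<Rightarrow> 'a set" where
  "open_sub a = range (himp a)"

lemma sublocale_sublocale_hull: "is_sublocale (sublocale_hull X)"
  unfolding sublocale_hull_def by (rule sublocale_Inter) simp

lemma sublocale_hull_upper: "X \<subseteq> sublocale_hull X"
  unfolding sublocale_hull_def by blast

lemma sublocale_hull_least: "X \<subseteq> U \<Longrightarrow> is_sublocale U \<Longrightarrow> sublocale_hull X \<subseteq> U"
  unfolding sublocale_hull_def by blast

lemma sublocale_hull_mono: "X \<subseteq> Y \<Longrightarrow> sublocale_hull X \<subseteq> sublocale_hull Y"
  by (meson sublocale_hull_least sublocale_sublocale_hull sublocale_hull_upper order.trans)

lemma sublocale_hull_eq_UNIV_mono:
  "sublocale_hull X = UNIV \<Longrightarrow> X \<subseteq> Y \<Longrightarrow> sublocale_hull Y = UNIV"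
  using sublocale_hull_mono by blast

lemma sublocale_hull_Un_top: "is_sublocale T \<Longrightarrow> sublocale_hull (T \<union> {top}) = T"
  using sublocale_hull_least[of "T \<union> {top}" T] sublocale_top sublocale_hull_upper by blast

lemma sublocale_hull_Un_hull: "sublocale_hull (X \<union> sublocale_hull Y) = sublocale_hull (X \<union> Y)"
proof
  have "X \<union> sublocale_hull Y \<subseteq> sublocale_hull (X \<union> Y)"
    using sublocale_hull_upper[of "X \<union> Y"] sublocale_hull_mono[of Y "X \<union> Y"] by blast
  then show "sublocale_hull (X \<union> sublocale_hull Y) \<subseteq> sublocale_hull (X \<union> Y)"
    by (rule sublocale_hull_least[OF _ sublocale_sublocale_hull])
  show "sublocale_hull (X \<union> Y) \<subseteq> sublocale_hull (X \<union> sublocale_hull Y)"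
    using sublocale_hull_upper[of Y] by (intro sublocale_hull_mono) blast
qed

lemma coS_meet_eq: "coS_meet S T = sublocale_hull (S \<union> T)"
  unfolding coS_meet_def coS_Inf_def sublocale_hull_def by simp

lemma coS_Inf_eq: "coS_Inf A = sublocale_hull (\<Union> A)"
  unfolding coS_Inf_def sublocale_hull_def by simp

lemma coS_pc_eq: "coS_pc S = \<Inter> {T. is_sublocale T \<and> sublocale_hull (T \<union> S) = UNIV}"
  unfolding coS_pc_def coS_Sup_def coS_meet_eq coS_bot_def ..

lemma sublocale_coS_pc: "is_sublocale (coS_pc S)"
  unfolding coS_pc_eq by (rule sublocale_Inter) simp

lemma coS_pc_lower: "is_sublocale T \<Longrightarrow> sublocale_hull (T \<union> S) = UNIV \<Longrightarrow> coS_pc S \<subseteq> T"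
  unfolding coS_pc_eq by blast

lemma coS_pc_greatest:
  "(\<And>T. is_sublocale T \<Longrightarrow> sublocale_hull (T \<union> S) = UNIV \<Longrightarrow> Y \<subseteq> T) \<Longrightarrow> Y \<subseteq> coS_pc S"
  unfolding coS_pc_eq by blast

lemma coS_pc_antimono: "A \<subseteq> B \<Longrightarrow> coS_pc B \<subseteq> coS_pc A"
  by (rule coS_pc_greatest, rule coS_pc_lower) (auto elim!: sublocale_hull_eq_UNIV_mono)

lemma coS_pc_UNIV: "coS_pc UNIV = {top}"
  using coS_pc_lower[OF sublocale_top_singleton, of UNIV] sublocale_hull_upper[of "{top} \<union> UNIV"]
    sublocale_top[OF sublocale_coS_pc]
  by blast

lemma coS_pc_top_singleton: "coS_pc {top} = UNIV"
  using coS_pc_greatest[of "{top}" UNIV] sublocale_hull_Un_top by blast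

lemma sublocale_hull_Un_subset_coS_pc_Int:
  "A \<subseteq> coS_pc C \<Longrightarrow> B \<subseteq> coS_pc D \<Longrightarrow> sublocale_hull (A \<union> B) \<subseteq> coS_pc (C \<inter> D)"
  using coS_pc_antimono[of "C \<inter> D" C] coS_pc_antimono[of "C \<inter> D" D]
  by (intro sublocale_hull_least[OF _ sublocale_coS_pc]) blast

definition himp_closure :: "'a::complete_lattice set \<Rightarrow> 'a set" where
  "himp_closure X = {himp y u | y u. u \<in> X}"

lemma eq_by_lower_bounds: "(\<And>z. z \<le> A \<longleftrightarrow> z \<le> B) \<Longrightarrow> A = (B::'a::order)"
  by (meson order.antisym order.refl)

section \<open>coS(L) is a frame\<close>

locale frame =
  fixes lattice_type :: "'a::complete_lattice itself"
  assumes is_frame: "is_frame TYPE('a)"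
begin

lemma inf_Sup_distrib: "inf (a::'a) (Sup S) = (SUP s\<in>S. inf a s)"
  using is_frame unfolding is_frame_def by blast

lemma le_himp_iff: "(z::'a) \<le> himp x s \<longleftrightarrow> inf z x \<le> s"
proof
  assume "z \<le> himp x s"
  then have "inf z x \<le> inf x (himp x s)"
    by (simp add: inf.coboundedI1 inf_commute le_infI2)
  also have "\<dots> = (SUP z\<in>{z. inf z x \<le> s}. inf x z)"
    unfolding himp_def by (rule inf_Sup_distrib)
  also have "\<dots> \<le> s"
    by (auto intro!: SUP_least simp: inf_commute)
  finally show "inf z x \<le> s" .
qed (simp add: himp_def Sup_upper)

lemma himp_eq_top_iff: "himp x s = (top::'a) \<longleftrightarrow> x \<le> s"
  using le_himp_iff[of top x s] by (simp add: top_unique)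

lemma inf_himp_le: "inf (x::'a) (himp x s) \<le> s"
  using le_himp_iff[of "himp x s" x s] by (simp add: inf_commute)

lemma himp_top_left: "himp top (s::'a) = s"
  by (rule eq_by_lower_bounds) (simp add: le_himp_iff)

lemma himp_INF: "himp x (Inf M) = (INF m\<in>M. himp (x::'a) m)"
  by (rule eq_by_lower_bounds) (auto simp: le_himp_iff le_Inf_iff le_INF_iff)

lemma himp_himp: "himp (x::'a) (himp y s) = himp (inf x y) s"
  by (rule eq_by_lower_bounds) (simp add: le_himp_iff inf_assoc)

lemma himp_Sup_left: "himp (Sup A) (x::'a) = (INF a\<in>A. himp a x)"
  by (rule eq_by_lower_bounds) (simp add: le_himp_iff inf_Sup_distrib le_INF_iff SUP_le_iff)

lemma inf_sup_himp: "inf (sup (x::'a) a) (himp a x) = x"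
proof (rule order.antisym)
  have "inf (himp a x) (sup x a) = (SUP y\<in>{x, a}. inf (himp a x) y)"
    using inf_Sup_distrib[of "himp a x" "{x, a}"] by simp
  also have "\<dots> \<le> x"
    using inf_himp_le[of a x] by (simp add: inf_commute le_infI2)
  finally show "inf (sup x a) (himp a x) \<le> x" by (simp add: inf_commute)
qed (simp add: le_himp)

lemma open_sub_iff: "y \<in> open_sub a \<longleftrightarrow> himp a y = (y::'a)"
  unfolding open_sub_def by (metis himp_himp inf.idem rangeE rangeI)

lemma sublocale_open_sub: "is_sublocale (open_sub (a::'a))"
  unfolding is_sublocale_def
proof (intro conjI allI impI ballI)
  fix T assume "T \<subseteq> open_sub a"
  then have "himp a (Inf T) = Inf T"
    by (simp add: himp_INF open_sub_iff subset_iff)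
  then show "Inf T \<in> open_sub a" by (simp add: open_sub_iff)
next
  fix x s assume "s \<in> open_sub a"
  then have "himp a (himp x s) = himp x (himp a s)"
    by (simp add: himp_himp inf_commute)
  then show "himp x s \<in> open_sub a"
    using \<open>s \<in> open_sub a\<close> by (simp add: open_sub_iff)
qed

lemma open_sub_mono: "(b::'a) \<le> a \<Longrightarrow> open_sub b \<subseteq> open_sub a"
  unfolding subset_iff open_sub_iff by (metis himp_himp inf_absorb2)

lemma sublocale_Inf_himp_closure: "is_sublocale (Inf ` Pow (himp_closure (X::'a set)))"
  unfolding is_sublocale_def
proof (intro conjI allI impI ballI)
  fix T assume T: "T \<subseteq> Inf ` Pow (himp_closure X)"
  let ?N = "{h \<in> himp_closure X. Inf T \<le> h}"
  have "Inf ?N \<le> t" if t: "t \<in> T" for t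
  proof -
    obtain M where M: "M \<subseteq> himp_closure X" "t = Inf M"
      using T t by blast
    have "M \<subseteq> ?N"
      using M Inf_lower[OF t] by (auto intro: order.trans Inf_lower)
    then show ?thesis
      using M(2) by (simp add: Inf_superset_mono)
  qed
  then have "Inf T = Inf ?N"
    by (intro order.antisym Inf_greatest) auto
  then show "Inf T \<in> Inf ` Pow (himp_closure X)" by blast
next
  fix x s assume "s \<in> Inf ` Pow (himp_closure X)"
  then obtain M where M: "M \<subseteq> himp_closure X" "s = Inf M" by blast
  have "himp x h \<in> himp_closure X" if h: "h \<in> M" for h
  proof -
    obtain y u where "h = himp y u" "u \<in> X"
      using M(1) h unfolding himp_closure_def by blast
    then show ?thesis
      unfolding himp_closure_def by (auto simp: himp_himp)
  qed
  then show "himp x s \<in> Inf ` Pow (himp_closure X)"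
    using M(2) by (auto simp: himp_INF)
qed

lemma sublocale_hull_eq_Inf_himp_closure:
  "sublocale_hull X = Inf ` Pow (himp_closure (X::'a set))"
proof
  have "X \<subseteq> Inf ` Pow (himp_closure X)"
  proof
    fix u assume "u \<in> X"
    then have "himp top u \<in> himp_closure X"
      unfolding himp_closure_def by blast
    then have "{u} \<in> Pow (himp_closure X)"
      by (simp add: himp_top_left)
    then show "u \<in> Inf ` Pow (himp_closure X)"
      by (rule rev_image_eqI) simp
  qed
  then show "sublocale_hull X \<subseteq> Inf ` Pow (himp_closure X)"
    by (rule sublocale_hull_least[OF _ sublocale_Inf_himp_closure])
  have "himp_closure X \<subseteq> sublocale_hull X"
    unfolding himp_closure_def
    using sublocale_himp[OF sublocale_sublocale_hull] sublocale_hull_upper by blast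
  then show "Inf ` Pow (himp_closure X) \<subseteq> sublocale_hull X"
    using sublocale_Inf[OF sublocale_sublocale_hull] by blast
qed

text \<open>With \<open>\<nu>\<close> the least element of \<open>A\<close> above \<open>x\<close>, write \<open>x = \<nu> \<and> (\<nu> \<rightarrow> x)\<close>;
  expressing \<open>x\<close> as a meet of implications into \<open>A \<union> B\<close> shows that \<open>\<nu> \<rightarrow> x\<close> lies in \<open>B\<close>.\<close>
lemma himp_Inf_above_mem:
  assumes A: "is_sublocale A" and B: "is_sublocale B" and x: "x \<in> sublocale_hull (A \<union> B)"
  shows "himp (Inf {a \<in> A. x \<le> a}) x \<in> (B::'a set)"
proof -
  define \<nu> where "\<nu> = Inf {a \<in> A. x \<le> a}"
  obtain M where M: "M \<subseteq> himp_closure (A \<union> B)" "x = Inf M"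
    using x by (auto simp: sublocale_hull_eq_Inf_himp_closure)
  have "himp \<nu> h \<in> B" if h: "h \<in> M" for h
  proof -
    obtain y u where hu: "h = himp y u" "u \<in> A \<union> B"
      using M(1) h unfolding himp_closure_def by blast
    show ?thesis
    proof (cases "u \<in> A")
      case True
      then have "h \<in> A" using hu sublocale_himp[OF A] by simp
      moreover have "x \<le> h" using M(2) h by (simp add: Inf_lower)
      ultimately have "\<nu> \<le> h" unfolding \<nu>_def by (simp add: Inf_lower)
      then show ?thesis
        using sublocale_top[OF B] by (simp add: himp_eq_top_iff[THEN iffD2])
    next
      case False
      then show ?thesis using hu sublocale_himp[OF B] by simp
    qed
  qed
  then have "himp \<nu> ` M \<subseteq> B" by blast
  then show ?thesis
    using M(2) sublocale_Inf[OF B] by (simp add: \<nu>_def himp_INF)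
qed

text \<open>The frame law \<open>A \<and> \<Squnion>\<^sub>i B i = \<Squnion>\<^sub>i (A \<and> B i)\<close> of coS(L).\<close>
lemma sublocale_hull_Un_INT:
  assumes A: "is_sublocale A" and B: "\<And>i. i \<in> I \<Longrightarrow> is_sublocale (B i)"
  shows "sublocale_hull (A \<union> (\<Inter>i\<in>I. B i)) = (\<Inter>i\<in>I. sublocale_hull (A \<union> B i :: 'a set))"
proof
  show "sublocale_hull (A \<union> (\<Inter>i\<in>I. B i)) \<subseteq> (\<Inter>i\<in>I. sublocale_hull (A \<union> B i))"
    by (intro INT_greatest sublocale_hull_mono) auto
next
  show "(\<Inter>i\<in>I. sublocale_hull (A \<union> B i)) \<subseteq> sublocale_hull (A \<union> (\<Inter>i\<in>I. B i))"
  proof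
    fix x assume x: "x \<in> (\<Inter>i\<in>I. sublocale_hull (A \<union> B i))"
    define \<nu> where "\<nu> = Inf {a \<in> A. x \<le> a}"
    have "\<nu> \<in> A" unfolding \<nu>_def by (rule sublocale_Inf[OF A]) auto
    moreover have "himp \<nu> x \<in> B i" if "i \<in> I" for i
      unfolding \<nu>_def using A B[OF that] x that by (intro himp_Inf_above_mem) auto
    ultimately have "{\<nu>, himp \<nu> x} \<subseteq> sublocale_hull (A \<union> (\<Inter>i\<in>I. B i))"
      using sublocale_hull_upper[of "A \<union> (\<Inter>i\<in>I. B i)"] by blast
    then have "inf \<nu> (himp \<nu> x) \<in> sublocale_hull (A \<union> (\<Inter>i\<in>I. B i))"
      by (simp add: sublocale_inf sublocale_sublocale_hull)
    moreover have "inf \<nu> (himp \<nu> x) = x"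
    proof (rule order.antisym)
      have "x \<le> \<nu>" unfolding \<nu>_def by (rule Inf_greatest) simp
      then show "x \<le> inf \<nu> (himp \<nu> x)" by (simp add: le_himp)
    qed (rule inf_himp_le)
    ultimately show "x \<in> sublocale_hull (A \<union> (\<Inter>i\<in>I. B i))" by simp
  qed
qed

lemma sublocale_hull_Un_Int:
  assumes "is_sublocale A" "is_sublocale B" "is_sublocale C"
  shows "sublocale_hull (A \<union> (B \<inter> C)) = sublocale_hull (A \<union> B) \<inter> sublocale_hull (A \<union> (C::'a set))"
proof -
  have "sublocale_hull (A \<union> (\<Inter>i\<in>{B, C}. i)) = (\<Inter>i\<in>{B, C}. sublocale_hull (A \<union> i))"
    by (rule sublocale_hull_Un_INT) (use assms in auto)
  then show ?thesis by simp
qed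

lemma sublocale_hull_INT_Un_INT:
  assumes A: "\<And>i. i \<in> I \<Longrightarrow> is_sublocale (A i)" and B: "\<And>j. j \<in> J \<Longrightarrow> is_sublocale (B j)"
  shows "sublocale_hull ((\<Inter>i\<in>I. A i) \<union> (\<Inter>j\<in>J. B j)) =
    (\<Inter>j\<in>J. \<Inter>i\<in>I. sublocale_hull (A i \<union> B j :: 'a set))"
proof -
  have "sublocale_hull ((\<Inter>i\<in>I. A i) \<union> (\<Inter>j\<in>J. B j)) =
      (\<Inter>j\<in>J. sublocale_hull ((\<Inter>i\<in>I. A i) \<union> B j))"
    by (rule sublocale_hull_Un_INT) (use A B in \<open>auto intro: sublocale_Inter\<close>)
  moreover have "sublocale_hull (B j \<union> (\<Inter>i\<in>I. A i)) = (\<Inter>i\<in>I. sublocale_hull (B j \<union> A i))"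
    if "j \<in> J" for j
    by (rule sublocale_hull_Un_INT) (use A B that in auto)
  ultimately show ?thesis by (simp add: Un_commute cong: INF_cong)
qed

lemma sublocale_hull_INT_Un_INT_antimono:
  assumes A: "\<And>t. is_sublocale (A t)" and B: "\<And>t. is_sublocale (B t)"
    and "antimono A" "antimono B"
  shows "sublocale_hull ((\<Inter>t\<in>{..<s}. A t) \<union> (\<Inter>t\<in>{..<s}. B t)) =
    (\<Inter>t\<in>{..<s::'i::linorder}. sublocale_hull (A t \<union> B t :: 'a set))"
proof -
  have "(\<Inter>t\<in>{..<s}. sublocale_hull (A t \<union> B t)) \<subseteq> sublocale_hull (A t \<union> B u)"
    if "t \<in> {..<s}" "u \<in> {..<s}" for t u
  proof -
    have "(\<Inter>t\<in>{..<s}. sublocale_hull (A t \<union> B t)) \<subseteq> sublocale_hull (A (max t u) \<union> B (max t u))"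
      using that by (intro INT_lower) simp
    also have "\<dots> \<subseteq> sublocale_hull (A t \<union> B u)"
      using \<open>antimono A\<close> \<open>antimono B\<close>
      by (intro sublocale_hull_mono Un_mono) (simp_all add: antimonoD)
    finally show ?thesis .
  qed
  then have "(\<Inter>u\<in>{..<s}. \<Inter>t\<in>{..<s}. sublocale_hull (A t \<union> B u)) = (\<Inter>t\<in>{..<s}. sublocale_hull (A t \<union> B t))"
    by blast
  then show ?thesis
    using sublocale_hull_INT_Un_INT[of "{..<s}" A "{..<s}" B] A B by simp
qed

lemma Int_sublocale_hull_Un_subset:
  assumes "is_sublocale T" "is_sublocale C" "is_sublocale D" "C \<inter> D \<subseteq> {top}"
  shows "sublocale_hull (T \<union> C) \<inter> sublocale_hull (T \<union> D) \<subseteq> (T::'a set)"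
proof -
  have "sublocale_hull (T \<union> C) \<inter> sublocale_hull (T \<union> D) = sublocale_hull (T \<union> (C \<inter> D))"
    using assms by (simp add: sublocale_hull_Un_Int)
  also have "\<dots> \<subseteq> sublocale_hull (T \<union> {top})"
    using assms(4) by (intro sublocale_hull_mono) blast
  also have "\<dots> = T"
    using assms(1) by (rule sublocale_hull_Un_top)
  finally show ?thesis .
qed

lemma sublocale_hull_Un_coS_pc: "is_sublocale X \<Longrightarrow> sublocale_hull (X \<union> coS_pc X) = (UNIV::'a set)"
  using sublocale_hull_Un_INT[of X "{T. is_sublocale T \<and> sublocale_hull (T \<union> X) = UNIV}" id]
  by (simp add: coS_pc_eq Un_commute)

lemma coS_pc_coS_pc_subset: "is_sublocale X \<Longrightarrow> coS_pc (coS_pc X) \<subseteq> (X::'a set)"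
  by (rule coS_pc_lower) (simp_all add: sublocale_hull_Un_coS_pc)

lemma coS_pc_coS_pc_coS_pc: "is_sublocale X \<Longrightarrow> coS_pc (coS_pc (coS_pc X)) = coS_pc (X::'a set)"
  by (meson coS_pc_antimono coS_pc_coS_pc_subset sublocale_coS_pc subset_antisym)

text \<open>In the order of coS(L): if \<open>C \<or> D = 1\<close> then \<open>(C \<and> G)\<^sup>* \<le> D \<or> G\<^sup>*\<close>.\<close>
lemma Int_coS_pc_subset_coS_pc_hull:
  assumes C: "is_sublocale C" and D: "is_sublocale D" and CD: "C \<inter> D \<subseteq> {top}"
  shows "D \<inter> coS_pc G \<subseteq> coS_pc (sublocale_hull (C \<union> G :: 'a set))"
proof (rule coS_pc_greatest)
  fix T assume T: "is_sublocale T" "sublocale_hull (T \<union> sublocale_hull (C \<union> G)) = UNIV"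
  have "sublocale_hull (sublocale_hull (T \<union> C) \<union> G) = UNIV"
    using T(2) by (simp add: sublocale_hull_Un_hull Un_commute Un_left_commute)
  then have "coS_pc G \<subseteq> sublocale_hull (T \<union> C)"
    by (rule coS_pc_lower[OF sublocale_sublocale_hull])
  moreover have "D \<subseteq> sublocale_hull (T \<union> D)"
    using sublocale_hull_upper[of "T \<union> D"] by blast
  ultimately have "D \<inter> coS_pc G \<subseteq> sublocale_hull (T \<union> C) \<inter> sublocale_hull (T \<union> D)"
    by blast
  also have "\<dots> \<subseteq> T"
    using T(1) C D CD by (rule Int_sublocale_hull_Un_subset)
  finally show "D \<inter> coS_pc G \<subseteq> T" .
qed

lemma open_sub_Int_closed_sub: "open_sub a \<inter> closed_sub a \<subseteq> {top::'a}"
  unfolding closed_sub_def by (auto simp: open_sub_iff dest: himp_eq_top_iff[THEN iffD2])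

lemma sublocale_hull_closed_sub_Un_open_sub:
  assumes "a \<le> b"
  shows "sublocale_hull (closed_sub a \<union> open_sub b) = (UNIV::'a set)"
proof -
  have "x \<in> sublocale_hull (closed_sub a \<union> open_sub b)" for x
  proof -
    have "{sup x b, himp b x} \<subseteq> sublocale_hull (closed_sub a \<union> open_sub b)"
      using assms sublocale_hull_upper[of "closed_sub a \<union> open_sub b"]
      by (auto simp: closed_sub_def open_sub_def le_supI2)
    then have "inf (sup x b) (himp b x) \<in> sublocale_hull (closed_sub a \<union> open_sub b)"
      by (simp add: sublocale_inf sublocale_sublocale_hull)
    then show ?thesis by (simp only: inf_sup_himp)
  qed
  then show ?thesis by blast
qed

lemma coS_pc_complement:
  assumes C: "is_sublocale C" and D: "is_sublocale D"
    and "C \<inter> D \<subseteq> {top}" and "sublocale_hull (D \<union> C) = (UNIV::'a set)"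
  shows "coS_pc C = D"
proof
  show "coS_pc C \<subseteq> D" using D assms(4) by (rule coS_pc_lower)
  show "D \<subseteq> coS_pc C"
  proof (rule coS_pc_greatest)
    fix T assume T: "is_sublocale T" "sublocale_hull (T \<union> C) = UNIV"
    have "D \<subseteq> sublocale_hull (T \<union> C) \<inter> sublocale_hull (T \<union> D)"
      using T(2) sublocale_hull_upper[of "T \<union> D"] by blast
    also have "\<dots> \<subseteq> T"
      using T(1) C D assms(3) by (rule Int_sublocale_hull_Un_subset)
    finally show "D \<subseteq> T" .
  qed
qed

lemma coS_pc_open_sub: "coS_pc (open_sub a) = closed_sub (a::'a)"
  by (rule coS_pc_complement)
    (simp_all add: sublocale_open_sub sublocale_closed_sub open_sub_Int_closed_sub
      sublocale_hull_closed_sub_Un_open_sub)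

lemma coS_pc_closed_sub: "coS_pc (closed_sub a) = open_sub (a::'a)"
  by (rule coS_pc_complement)
    (use open_sub_Int_closed_sub in \<open>auto simp: sublocale_open_sub sublocale_closed_sub
      sublocale_hull_closed_sub_Un_open_sub Un_commute\<close>)

lemma subset_open_sub:
  assumes B: "is_sublocale B" and "closed_sub a \<inter> B \<subseteq> {top}"
  shows "B \<subseteq> open_sub (a::'a)"
proof
  fix b assume b: "b \<in> B"
  have "himp (himp a b) b \<in> B" using sublocale_himp[OF B b] .
  moreover have "a \<le> himp (himp a b) b"
    using inf_himp_le[of a b] by (simp add: le_himp_iff inf_commute)
  ultimately have "himp (himp a b) b = top"
    using assms(2) by (auto simp: closed_sub_def)
  then have "himp a b = b"
    by (simp add: himp_eq_top_iff order.antisym le_himp)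
  then show "b \<in> open_sub a" by (simp add: open_sub_iff)
qed

lemma sublocale_hull_UN_open_sub:
  assumes "Sup (a ` I) = top"
  shows "sublocale_hull (\<Union>i\<in>I. open_sub (a i)) = (UNIV::'a set)"
proof -
  have "x \<in> sublocale_hull (\<Union>i\<in>I. open_sub (a i))" for x
  proof -
    have "(\<lambda>i. himp (a i) x) ` I \<subseteq> sublocale_hull (\<Union>i\<in>I. open_sub (a i))"
      using sublocale_hull_upper[of "\<Union>i\<in>I. open_sub (a i)"] by (auto simp: open_sub_def)
    then have "(INF i\<in>I. himp (a i) x) \<in> sublocale_hull (\<Union>i\<in>I. open_sub (a i))"
      by (rule sublocale_Inf[OF sublocale_sublocale_hull])
    moreover have "(INF i\<in>I. himp (a i) x) = x"
      using himp_Sup_left[of "a ` I" x] assms by (simp add: himp_top_left image_comp)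
    ultimately show ?thesis by simp
  qed
  then show ?thesis by blast
qed

end

section \<open>Homomorphisms into coS(L)\<close>

lemma hom_IR_iff:
  "hom_IR f \<longleftrightarrow>
    (\<forall>r. is_sublocale (fst f r)) \<and> (\<forall>s. is_sublocale (snd f s)) \<and>
    (\<forall>r s. s \<le> r \<longrightarrow> sublocale_hull (fst f r \<union> snd f s) = UNIV) \<and>
    (\<forall>r. fst f r = (\<Inter>t\<in>{r<..}. fst f t)) \<and> (\<forall>s. snd f s = (\<Inter>t\<in>{..<s}. snd f t))"
proof -
  have greater: "\<And>F (r::rat). {F s |s. r < s} = F ` {r<..}"
    and less: "\<And>F (s::rat). {F r |r. r < s} = F ` {..<s}"
    by auto
  show ?thesis
    by (simp only: hom_IR_def coS_meet_eq coS_bot_def coS_Sup_def greater less)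
qed

lemma hom_IR_I:
  assumes "\<And>r. is_sublocale (fst f r)" "\<And>s. is_sublocale (snd f s)"
    "\<And>r s. s \<le> r \<Longrightarrow> sublocale_hull (fst f r \<union> snd f s) = UNIV"
    "\<And>r. fst f r = (\<Inter>t\<in>{r<..}. fst f t)" "\<And>s. snd f s = (\<Inter>t\<in>{..<s}. snd f t)"
  shows "hom_IR f"
  using assms unfolding hom_IR_iff by blast

lemma
  assumes "hom_IR f"
  shows hom_IR_sublocale_fst: "is_sublocale (fst f r)"
    and hom_IR_sublocale_snd: "is_sublocale (snd f s)"
    and hom_IR_hull_eq_UNIV: "s \<le> r \<Longrightarrow> sublocale_hull (fst f r \<union> snd f s) = UNIV"
    and hom_IR_fst_INT: "fst f r = (\<Inter>t\<in>{r<..}. fst f t)"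
    and hom_IR_snd_INT: "snd f s = (\<Inter>t\<in>{..<s}. snd f t)"
proof -
  \<comment> \<open>Used as rewrite rules, the last two conjuncts would loop.\<close>
  note H = assms[unfolded hom_IR_iff]
  show "is_sublocale (fst f r)"
    using H[THEN conjunct1] by (rule spec)
  show "is_sublocale (snd f s)"
    using H[THEN conjunct2, THEN conjunct1] by (rule spec)
  show "s \<le> r \<Longrightarrow> sublocale_hull (fst f r \<union> snd f s) = UNIV"
    using H[THEN conjunct2, THEN conjunct2, THEN conjunct1] by blast
  show "fst f r = (\<Inter>t\<in>{r<..}. fst f t)"
    using H[THEN conjunct2, THEN conjunct2, THEN conjunct2, THEN conjunct1] by (rule spec)
  show "snd f s = (\<Inter>t\<in>{..<s}. snd f t)"
    using H[THEN conjunct2, THEN conjunct2, THEN conjunct2, THEN conjunct2] by (rule spec)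
qed

lemma hom_IR_fst_mono:
  assumes f: "hom_IR f" and "r \<le> t"
  shows "fst f r \<subseteq> fst f t"
proof (cases "r = t")
  case False
  have "fst f r = (\<Inter>u\<in>{r<..}. fst f u)" by (rule hom_IR_fst_INT[OF f])
  also have "\<dots> \<subseteq> fst f t" using False \<open>r \<le> t\<close> by (intro INT_lower) simp
  finally show ?thesis .
qed simp

lemma hom_IR_snd_antimono:
  assumes f: "hom_IR f" and "t \<le> s"
  shows "snd f s \<subseteq> snd f t"
proof (cases "s = t")
  case False
  have "snd f s = (\<Inter>u\<in>{..<s}. snd f u)" by (rule hom_IR_snd_INT[OF f])
  also have "\<dots> \<subseteq> snd f t" using False \<open>t \<le> s\<close> by (intro INT_lower) simp
  finally show ?thesis .
qed simp

lemma antimono_snd_hom_IR: "hom_IR f \<Longrightarrow> antimono (snd f)"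
  by (rule antimonoI) (rule hom_IR_snd_antimono)

lemma hom_R_iff: "hom_R f \<longleftrightarrow> hom_IR f \<and> (\<forall>r s. r < s \<longrightarrow> fst f r \<inter> snd f s = {top})"
  unfolding hom_R_def coS_join_def coS_Sup_def coS_top_def by simp

lemma hom_R_hom_IR: "hom_R f \<Longrightarrow> hom_IR f"
  unfolding hom_R_def by simp

lemma hom_R_Int_eq: "hom_R f \<Longrightarrow> r < s \<Longrightarrow> fst f r \<inter> snd f s = {top}"
  unfolding hom_R_iff by blast

lemma Fbar_iff:
  "f \<in> Fbar \<longleftrightarrow> hom_IR f \<and>
    (\<forall>r s. r < s \<longrightarrow> snd f s \<subseteq> coS_pc (fst f r) \<and> fst f r \<subseteq> coS_pc (snd f s))"
  unfolding Fbar_def coS_le_def by simp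

lemma Fbar_I:
  "hom_IR f \<Longrightarrow> (\<And>r s. r < s \<Longrightarrow> snd f s \<subseteq> coS_pc (fst f r)) \<Longrightarrow>
    (\<And>r s. r < s \<Longrightarrow> fst f r \<subseteq> coS_pc (snd f s)) \<Longrightarrow> f \<in> Fbar"
  unfolding Fbar_iff by blast

lemma
  assumes "f \<in> Fbar"
  shows Fbar_hom_IR: "hom_IR f"
    and Fbar_snd_subset_coS_pc: "r < s \<Longrightarrow> snd f s \<subseteq> coS_pc (fst f r)"
    and Fbar_fst_subset_coS_pc: "r < s \<Longrightarrow> fst f r \<subseteq> coS_pc (snd f s)"
  using assms unfolding Fbar_iff by blast+

lemma Fle_iff: "Fle f g \<longleftrightarrow> (\<forall>r. fst g r \<subseteq> fst f r) \<and> (\<forall>s. snd f s \<subseteq> snd g s)"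
  unfolding Fle_def coS_le_def ..

lemma Fle_refl [simp]: "Fle f f"
  by (simp add: Fle_iff)

lemma Fbar_eq_plus_inf:
  assumes f: "f \<in> Fbar" and snd_f: "\<And>s. snd f s = UNIV"
  shows "f = plus_inf"
proof -
  have "fst f r = {top}" for r
    using Fbar_fst_subset_coS_pc[OF f, of r "r + 1"] sublocale_top[OF hom_IR_sublocale_fst[OF Fbar_hom_IR[OF f]]]
    by (auto simp: snd_f coS_pc_UNIV)
  then show ?thesis
    by (simp add: plus_inf_def coS_top_def coS_bot_def prod_eq_iff fun_eq_iff snd_f)
qed

lemma Fbar_eq_minus_inf:
  assumes f: "f \<in> Fbar" and fst_f: "\<And>r. fst f r = UNIV"
  shows "f = minus_inf"
proof -
  have "snd f s = {top}" for s
    using Fbar_snd_subset_coS_pc[OF f, of "s - 1" s] sublocale_top[OF hom_IR_sublocale_snd[OF Fbar_hom_IR[OF f]]]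
    by (auto simp: fst_f coS_pc_UNIV)
  then show ?thesis
    by (simp add: minus_inf_def coS_top_def coS_bot_def prod_eq_iff fun_eq_iff fst_f)
qed

lemma Fle_plus_inf: "hom_IR f \<Longrightarrow> Fle f plus_inf"
  by (simp add: Fle_iff plus_inf_def coS_top_def coS_bot_def sublocale_top hom_IR_sublocale_fst)

lemma Fle_minus_inf: "hom_IR f \<Longrightarrow> Fle minus_inf f"
  by (simp add: Fle_iff minus_inf_def coS_top_def coS_bot_def sublocale_top hom_IR_sublocale_snd)

definition negate :: "'a::complete_lattice rfun \<Rightarrow> 'a rfun" where
  "negate f = (\<lambda>r. snd f (- r), \<lambda>s. fst f (- s))"

lemma fst_negate [simp]: "fst (negate f) r = snd f (- r)"
  and snd_negate [simp]: "snd (negate f) s = fst f (- s)"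
  unfolding negate_def by simp_all

lemma negate_negate [simp]: "negate (negate f) = f"
  unfolding negate_def by simp

lemma negate_plus_inf [simp]: "negate plus_inf = minus_inf"
  and negate_minus_inf [simp]: "negate minus_inf = plus_inf"
  unfolding negate_def plus_inf_def minus_inf_def by simp_all

lemma negate_eq_iff [simp]: "negate f = negate g \<longleftrightarrow> f = g"
proof
  assume "negate f = negate g"
  then have "negate (negate f) = negate (negate g)" by (rule arg_cong)
  then show "f = g" by simp
qed simp

lemma negate_eq_plus_inf_iff [simp]: "negate f = plus_inf \<longleftrightarrow> f = minus_inf"
  using negate_eq_iff[of f minus_inf] by simp

lemma negate_eq_minus_inf_iff [simp]: "negate f = minus_inf \<longleftrightarrow> f = plus_inf"
  using negate_eq_iff[of f plus_inf] by simp

lemma all_rat_uminus_iff: "(\<forall>r::rat. P (- r)) \<longleftrightarrow> (\<forall>r. P r)"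
proof (intro iffI allI)
  fix r assume "\<forall>r. P (- r)"
  then have "P (- (- r))" by (rule spec)
  then show "P r" by simp
qed simp

lemma range_rat_uminus: "range (\<lambda>r::rat. F (- r)) = range F"
proof -
  have "F ` range uminus = range (\<lambda>r::rat. F (- r))" by (simp only: image_image)
  then show ?thesis using surj_uminus[where 'a = rat] by simp
qed

lemma INT_greaterThan_uminus: "(\<Inter>t\<in>{r<..}. F (- t)) = (\<Inter>t\<in>{..<- r::rat}. F t)"
proof -
  have "(\<Inter>t\<in>{r<..}. F (- t)) = (\<Inter>t\<in>uminus ` {r<..}. F t)"
    by (simp only: image_image)
  then show ?thesis by simp
qed

lemma INT_lessThan_uminus: "(\<Inter>t\<in>{..<s}. F (- t)) = (\<Inter>t\<in>{- s::rat<..}. F t)"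
proof -
  have "(\<Inter>t\<in>{..<s}. F (- t)) = (\<Inter>t\<in>uminus ` {..<s}. F t)"
    by (simp only: image_image)
  then show ?thesis by simp
qed

lemma hom_IR_negate:
  assumes f: "hom_IR f"
  shows "hom_IR (negate f)"
proof (rule hom_IR_I)
  fix r
  have "snd f (- r) = (\<Inter>t\<in>{..<- r}. snd f t)" by (rule hom_IR_snd_INT[OF f])
  also have "\<dots> = (\<Inter>t\<in>{r<..}. snd f (- t))" by (rule INT_greaterThan_uminus[symmetric])
  finally show "fst (negate f) r = (\<Inter>t\<in>{r<..}. fst (negate f) t)" by simp
next
  fix s
  have "fst f (- s) = (\<Inter>t\<in>{- s<..}. fst f t)" by (rule hom_IR_fst_INT[OF f])
  also have "\<dots> = (\<Inter>t\<in>{..<s}. fst f (- t))" by (rule INT_lessThan_uminus[symmetric])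
  finally show "snd (negate f) s = (\<Inter>t\<in>{..<s}. snd (negate f) t)" by simp
next
  fix r s :: rat assume "s \<le> r"
  then show "sublocale_hull (fst (negate f) r \<union> snd (negate f) s) = UNIV"
    using hom_IR_hull_eq_UNIV[OF f, where r = "- s" and s = "- r"] by (simp add: Un_commute)
qed (simp_all add: hom_IR_sublocale_fst[OF f] hom_IR_sublocale_snd[OF f])

lemma hom_R_negate_iff [simp]: "hom_R (negate f) \<longleftrightarrow> hom_R f"
proof -
  have "hom_R f" if nf: "hom_R (negate f)" for f
    unfolding hom_R_iff
  proof (intro conjI allI impI)
    show "hom_IR f"
      using hom_IR_negate[of "negate f"] nf by (simp add: hom_R_iff)
    fix r s :: rat assume "r < s"
    then show "fst f r \<inter> snd f s = {top}"
      using hom_R_Int_eq[OF nf, of "- s" "- r"] by (simp add: Int_commute)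
  qed
  from this[of f] this[of "negate f"] show ?thesis by auto
qed

lemma Fbar_negate_iff [simp]: "negate f \<in> Fbar \<longleftrightarrow> f \<in> Fbar"
proof -
  have "negate f \<in> Fbar" if "f \<in> Fbar" for f
  proof (rule Fbar_I)
    show "hom_IR (negate f)" using that by (intro hom_IR_negate Fbar_hom_IR)
  next
    fix r s :: rat assume "r < s"
    then have "- s < - r" by simp
    then show "snd (negate f) s \<subseteq> coS_pc (fst (negate f) r)"
      and "fst (negate f) r \<subseteq> coS_pc (snd (negate f) s)"
      using Fbar_snd_subset_coS_pc[OF that] Fbar_fst_subset_coS_pc[OF that] by simp_all
  qed
  from this[of f] this[of "negate f"] show ?thesis by auto
qed

lemma Fle_negate_iff [simp]: "Fle (negate f) (negate g) \<longleftrightarrow> Fle g f"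
  unfolding Fle_iff
  by (simp add: all_rat_uminus_iff[of "\<lambda>r. snd g r \<subseteq> snd f r"]
      all_rat_uminus_iff[of "\<lambda>r. fst f r \<subseteq> fst g r"] conj_commute)

lemma Ball_Fbar_negate: "(\<forall>k\<in>Fbar. P k) \<longleftrightarrow> (\<forall>k\<in>Fbar. P (negate k))"
proof
  assume P: "\<forall>k\<in>Fbar. P (negate k)"
  show "\<forall>k\<in>Fbar. P k"
  proof
    fix k :: "'a rfun" assume "k \<in> Fbar"
    then have "negate k \<in> Fbar" by simp
    with P have "P (negate (negate k))" by (rule bspec)
    then show "P k" by simp
  qed
qed simp

lemma is_Fjoin_negate_iff: "is_Fjoin (negate f) (negate g) (negate h) \<longleftrightarrow> is_Fmeet f g h"
  unfolding is_Fjoin_def is_Fmeet_def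
  by (subst Ball_Fbar_negate[where P = "\<lambda>k. Fle (negate f) k \<and> Fle (negate g) k \<longrightarrow> Fle (negate h) k"])
    simp

lemma is_Fmeet_negate_iff: "is_Fmeet (negate f) (negate g) (negate h) \<longleftrightarrow> is_Fjoin f g h"
  using is_Fjoin_negate_iff[of "negate f" "negate g" "negate h"] by simp

lemma Freal_negate_iff [simp]: "negate f \<in> Freal \<longleftrightarrow> f \<in> Freal"
proof -
  have "(\<forall>g\<in>Fbar. (is_Fjoin (negate f) g plus_inf \<longrightarrow> g = plus_inf) \<and>
        (is_Fmeet (negate f) g minus_inf \<longrightarrow> g = minus_inf)) \<longleftrightarrow>
      (\<forall>g\<in>Fbar. (is_Fjoin (negate f) (negate g) plus_inf \<longrightarrow> negate g = plus_inf) \<and>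
        (is_Fmeet (negate f) (negate g) minus_inf \<longrightarrow> negate g = minus_inf))"
    by (rule Ball_Fbar_negate)
  also have "\<dots> \<longleftrightarrow> (\<forall>g\<in>Fbar. (is_Fmeet f g minus_inf \<longrightarrow> g = minus_inf) \<and>
        (is_Fjoin f g plus_inf \<longrightarrow> g = plus_inf))"
    using is_Fjoin_negate_iff[of f _ minus_inf, simplified]
      is_Fmeet_negate_iff[of f _ plus_inf, simplified]
    by simp
  finally show ?thesis unfolding Freal_def by auto
qed

lemma negate_mem_LSC_iff [simp]: "negate f \<in> LSC \<longleftrightarrow> f \<in> USC"
  unfolding LSC_def USC_def
  by (simp add: all_rat_uminus_iff[of "\<lambda>r. is_closed_sub (snd f r)"] range_rat_uminus)

lemma negate_mem_LSCbar_iff [simp]: "negate f \<in> LSCbar \<longleftrightarrow> f \<in> USCbar"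
  unfolding LSCbar_def USCbar_def
  by (simp add: all_rat_uminus_iff[of "\<lambda>r. is_closed_sub (snd f r)"])

definition pointwise_sup :: "'a::complete_lattice rfun \<Rightarrow> 'a rfun \<Rightarrow> 'a rfun" where
  "pointwise_sup f g = (\<lambda>r. fst f r \<inter> fst g r, \<lambda>s. sublocale_hull (snd f s \<union> snd g s))"

definition pointwise_inf :: "'a::complete_lattice rfun \<Rightarrow> 'a rfun \<Rightarrow> 'a rfun" where
  "pointwise_inf f g = (\<lambda>r. sublocale_hull (fst f r \<union> fst g r), \<lambda>s. snd f s \<inter> snd g s)"

lemma fst_pointwise_sup [simp]: "fst (pointwise_sup f g) r = fst f r \<inter> fst g r"
  and snd_pointwise_sup [simp]: "snd (pointwise_sup f g) s = sublocale_hull (snd f s \<union> snd g s)"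
  and fst_pointwise_inf [simp]: "fst (pointwise_inf f g) r = sublocale_hull (fst f r \<union> fst g r)"
  and snd_pointwise_inf [simp]: "snd (pointwise_inf f g) s = snd f s \<inter> snd g s"
  unfolding pointwise_sup_def pointwise_inf_def by simp_all

lemma pointwise_inf_eq_negate: "pointwise_inf f g = negate (pointwise_sup (negate f) (negate g))"
  unfolding pointwise_inf_def pointwise_sup_def negate_def by simp

lemma Fle_pointwise_sup1: "Fle f (pointwise_sup f g)"
  and Fle_pointwise_sup2: "Fle g (pointwise_sup f g)"
  using sublocale_hull_upper[of "snd f s \<union> snd g s" for s] by (auto simp: Fle_iff)

lemma Fle_pointwise_inf1: "Fle (pointwise_inf f g) f"
  and Fle_pointwise_inf2: "Fle (pointwise_inf f g) g"
  using sublocale_hull_upper[of "fst f r \<union> fst g r" for r] by (auto simp: Fle_iff)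

lemma pointwise_sup_snd_subset_coS_pc:
  "f \<in> Fbar \<Longrightarrow> g \<in> Fbar \<Longrightarrow> r < s \<Longrightarrow>
    snd (pointwise_sup f g) s \<subseteq> coS_pc (fst (pointwise_sup f g) r)"
  by (simp add: sublocale_hull_Un_subset_coS_pc_Int Fbar_snd_subset_coS_pc)

lemma pointwise_inf_fst_subset_coS_pc:
  "f \<in> Fbar \<Longrightarrow> g \<in> Fbar \<Longrightarrow> r < s \<Longrightarrow>
    fst (pointwise_inf f g) r \<subseteq> coS_pc (snd (pointwise_inf f g) s)"
  by (simp add: sublocale_hull_Un_subset_coS_pc_Int Fbar_fst_subset_coS_pc)

context frame
begin

lemma const_in_Fbar:
  assumes U: "is_sublocale (U :: 'a set)" and pc_pc: "coS_pc (coS_pc U) = U"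
  shows "(\<lambda>_. U, \<lambda>_. coS_pc U) \<in> Fbar"
proof (rule Fbar_I)
  show "hom_IR (\<lambda>_::rat. U, \<lambda>_::rat. coS_pc U)"
    by (rule hom_IR_I) (simp_all add: U sublocale_coS_pc sublocale_hull_Un_coS_pc[OF U])
qed (simp_all add: pc_pc)

lemma plus_inf_in_Fbar: "(plus_inf :: 'a rfun) \<in> Fbar"
  using const_in_Fbar[OF sublocale_top_singleton]
  by (simp add: plus_inf_def coS_top_def coS_bot_def coS_pc_top_singleton coS_pc_UNIV)

lemma minus_inf_in_Fbar: "(minus_inf :: 'a rfun) \<in> Fbar"
  using const_in_Fbar[OF sublocale_UNIV]
  by (simp add: minus_inf_def coS_top_def coS_bot_def coS_pc_top_singleton coS_pc_UNIV)

lemma const_open_sub_in_Fbar: "(\<lambda>_. open_sub (b::'a), \<lambda>_. coS_pc (open_sub b)) \<in> Fbar"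
  by (rule const_in_Fbar) (simp_all add: sublocale_open_sub coS_pc_open_sub coS_pc_closed_sub)

lemma const_coS_pc_in_Fbar:
  assumes V: "is_sublocale (V::'a set)"
  shows "(\<lambda>_. coS_pc (coS_pc V), \<lambda>_. coS_pc V) \<in> Fbar"
  using const_in_Fbar[OF sublocale_coS_pc coS_pc_coS_pc_coS_pc[OF sublocale_coS_pc[of V]]]
  by (simp add: coS_pc_coS_pc_coS_pc[OF V])

lemma hom_IR_pointwise_sup:
  assumes f: "hom_IR (f :: 'a rfun)" and g: "hom_IR g"
  shows "hom_IR (pointwise_sup f g)"
proof (rule hom_IR_I)
  fix r s :: rat assume sr: "s \<le> r"
  let ?H = "sublocale_hull (snd f s \<union> snd g s)"
  have "snd f s \<subseteq> ?H" "snd g s \<subseteq> ?H"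
    using sublocale_hull_upper[of "snd f s \<union> snd g s"] by blast+
  then have "sublocale_hull (?H \<union> fst f r) = UNIV" "sublocale_hull (?H \<union> fst g r) = UNIV"
    using sublocale_hull_eq_UNIV_mono[OF hom_IR_hull_eq_UNIV[OF f sr], of "?H \<union> fst f r"]
      sublocale_hull_eq_UNIV_mono[OF hom_IR_hull_eq_UNIV[OF g sr], of "?H \<union> fst g r"]
    by blast+
  moreover have "sublocale_hull (?H \<union> (fst f r \<inter> fst g r)) =
      sublocale_hull (?H \<union> fst f r) \<inter> sublocale_hull (?H \<union> fst g r)"
    by (rule sublocale_hull_Un_Int) (simp_all add: sublocale_sublocale_hull hom_IR_sublocale_fst f g)
  ultimately show "sublocale_hull (fst (pointwise_sup f g) r \<union> snd (pointwise_sup f g) s) = UNIV"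
    by (simp add: Un_commute)
next
  fix r
  show "fst (pointwise_sup f g) r = (\<Inter>t\<in>{r<..}. fst (pointwise_sup f g) t)"
    using hom_IR_fst_INT[OF f, of r] hom_IR_fst_INT[OF g, of r] by (simp add: INT_Int_distrib)
next
  fix s
  have "sublocale_hull (snd f s \<union> snd g s) =
      sublocale_hull ((\<Inter>t\<in>{..<s}. snd f t) \<union> (\<Inter>t\<in>{..<s}. snd g t))"
    using hom_IR_snd_INT[OF f, of s] hom_IR_snd_INT[OF g, of s] by simp
  also have "\<dots> = (\<Inter>t\<in>{..<s}. sublocale_hull (snd f t \<union> snd g t))"
    by (rule sublocale_hull_INT_Un_INT_antimono)
      (simp_all add: hom_IR_sublocale_snd antimono_snd_hom_IR f g)
  finally show "snd (pointwise_sup f g) s = (\<Inter>t\<in>{..<s}. snd (pointwise_sup f g) t)"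
    by simp
qed (simp_all add: sublocale_Int sublocale_sublocale_hull hom_IR_sublocale_fst f g)

lemma hom_IR_pointwise_inf: "hom_IR (f :: 'a rfun) \<Longrightarrow> hom_IR g \<Longrightarrow> hom_IR (pointwise_inf f g)"
  unfolding pointwise_inf_eq_negate by (intro hom_IR_negate hom_IR_pointwise_sup)

section \<open>Lower semicontinuous elements\<close>

context
  fixes f :: "'a rfun" and a :: "rat \<Rightarrow> 'a"
  assumes f: "hom_R f" and fst_f: "\<And>r. fst f r = closed_sub (a r)"
begin

lemma lsc_snd_subset_open_sub: "r < s \<Longrightarrow> snd f s \<subseteq> open_sub (a r)"
  by (rule subset_open_sub[OF hom_IR_sublocale_snd[OF hom_R_hom_IR[OF f]]])
    (use hom_R_Int_eq[OF f, of r s] in \<open>simp add: fst_f\<close>)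

lemma lsc_open_sub_subset_snd: "open_sub (a s) \<subseteq> snd f s"
proof -
  have "sublocale_hull (snd f s \<union> closed_sub (a s)) = UNIV"
    using hom_IR_hull_eq_UNIV[OF hom_R_hom_IR[OF f], of s s] by (simp add: fst_f Un_commute)
  then have "coS_pc (closed_sub (a s)) \<subseteq> snd f s"
    by (rule coS_pc_lower[OF hom_IR_sublocale_snd[OF hom_R_hom_IR[OF f]]])
  then show ?thesis by (simp add: coS_pc_closed_sub)
qed

lemma lsc_antimono: "r \<le> t \<Longrightarrow> a t \<le> a r"
  using hom_IR_fst_mono[OF hom_R_hom_IR[OF f], of r t] by (simp add: fst_f closed_sub_subset_iff)

lemma lsc_in_Fbar: "f \<in> Fbar"
proof (rule Fbar_I[OF hom_R_hom_IR[OF f]])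
  fix r s :: rat assume rs: "r < s"
  then show "snd f s \<subseteq> coS_pc (fst f r)"
    by (simp add: fst_f coS_pc_closed_sub lsc_snd_subset_open_sub)
  show "fst f r \<subseteq> coS_pc (snd f s)"
    using coS_pc_antimono[OF lsc_snd_subset_open_sub[OF rs]] by (simp add: fst_f coS_pc_open_sub)
qed

lemma lsc_pointwise_sup_in_Fbar:
  assumes g: "g \<in> Fbar"
  shows "pointwise_sup f g \<in> Fbar"
proof (rule Fbar_I)
  show "hom_IR (pointwise_sup f g)"
    by (rule hom_IR_pointwise_sup[OF hom_R_hom_IR[OF f] Fbar_hom_IR[OF g]])
  show "snd (pointwise_sup f g) s \<subseteq> coS_pc (fst (pointwise_sup f g) r)" if "r < s" for r s
    by (rule pointwise_sup_snd_subset_coS_pc[OF lsc_in_Fbar g that])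
  fix r s :: rat assume rs: "r < s"
  have "closed_sub (a r) \<inter> coS_pc (snd g s) \<subseteq> coS_pc (sublocale_hull (open_sub (a r) \<union> snd g s))"
    by (rule Int_coS_pc_subset_coS_pc_hull[OF sublocale_open_sub sublocale_closed_sub open_sub_Int_closed_sub])
  also have "\<dots> \<subseteq> coS_pc (sublocale_hull (snd f s \<union> snd g s))"
    using lsc_snd_subset_open_sub[OF rs] by (intro coS_pc_antimono sublocale_hull_mono) blast
  finally show "fst (pointwise_sup f g) r \<subseteq> coS_pc (snd (pointwise_sup f g) s)"
    using Fbar_fst_subset_coS_pc[OF g rs] by (auto simp: fst_f)
qed

lemma lsc_pointwise_inf_in_Fbar:
  assumes g: "g \<in> Fbar"
  shows "pointwise_inf f g \<in> Fbar"
proof (rule Fbar_I)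
  show "hom_IR (pointwise_inf f g)"
    by (rule hom_IR_pointwise_inf[OF hom_R_hom_IR[OF f] Fbar_hom_IR[OF g]])
  show "fst (pointwise_inf f g) r \<subseteq> coS_pc (snd (pointwise_inf f g) s)" if "r < s" for r s
    by (rule pointwise_inf_fst_subset_coS_pc[OF lsc_in_Fbar g that])
  fix r s :: rat assume rs: "r < s"
  have "open_sub (a r) \<inter> coS_pc (fst g r) \<subseteq> coS_pc (sublocale_hull (closed_sub (a r) \<union> fst g r))"
    by (rule Int_coS_pc_subset_coS_pc_hull[OF sublocale_closed_sub sublocale_open_sub])
      (use open_sub_Int_closed_sub in blast)
  then show "snd (pointwise_inf f g) s \<subseteq> coS_pc (fst (pointwise_inf f g) r)"
    using lsc_snd_subset_open_sub[OF rs] Fbar_snd_subset_coS_pc[OF g rs] by (auto simp: fst_f)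
qed

lemma lsc_join_plus_inf:
  assumes l3: "sublocale_hull (\<Union>(range (fst f))) = UNIV" and g: "g \<in> Fbar"
    and join: "is_Fjoin f g plus_inf"
  shows "g = plus_inf"
proof -
  have "Fle plus_inf (pointwise_sup f g)"
    using join lsc_pointwise_sup_in_Fbar[OF g] Fle_pointwise_sup1 Fle_pointwise_sup2
    unfolding is_Fjoin_def by blast
  then have "\<forall>s. UNIV \<subseteq> snd (pointwise_sup f g) s"
    by (simp add: Fle_iff plus_inf_def coS_bot_def)
  then have hull_snd: "sublocale_hull (snd f s \<union> snd g s) = UNIV" for s
    by auto
  have "snd g s = UNIV" for s
  proof -
    have "fst f r \<subseteq> snd g s" for r
    proof -
      define t where "t = max s (r + 1)"
      have rt: "r < t" and st: "s \<le> t" unfolding t_def by auto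
      have "sublocale_hull (snd g t \<union> open_sub (a r)) = UNIV"
        by (rule sublocale_hull_eq_UNIV_mono[OF hull_snd[of t]])
          (use lsc_snd_subset_open_sub[OF rt] in blast)
      then have "coS_pc (open_sub (a r)) \<subseteq> snd g t"
        by (rule coS_pc_lower[OF hom_IR_sublocale_snd[OF Fbar_hom_IR[OF g]]])
      then show ?thesis
        using hom_IR_snd_antimono[OF Fbar_hom_IR[OF g] st] by (simp add: fst_f coS_pc_open_sub)
    qed
    then have "sublocale_hull (\<Union>(range (fst f))) \<subseteq> snd g s"
      by (intro sublocale_hull_least hom_IR_sublocale_snd[OF Fbar_hom_IR[OF g]]) blast
    then show ?thesis using l3 by blast
  qed
  then show ?thesis by (rule Fbar_eq_plus_inf[OF g])
qed

lemma lsc_meet_minus_inf: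
  assumes l2: "Sup (range a) = top" and g: "g \<in> Fbar"
    and meet: "is_Fmeet f g minus_inf"
  shows "g = minus_inf"
proof -
  have g_hom: "hom_IR g" by (rule Fbar_hom_IR[OF g])
  have "Fle (pointwise_inf f g) minus_inf"
    using meet lsc_pointwise_inf_in_Fbar[OF g] Fle_pointwise_inf1 Fle_pointwise_inf2
    unfolding is_Fmeet_def by blast
  then have "\<forall>r. UNIV \<subseteq> fst (pointwise_inf f g) r"
    by (simp add: Fle_iff minus_inf_def coS_bot_def)
  then have hull_fst: "sublocale_hull (fst g r \<union> closed_sub (a r)) = UNIV" for r
    by (auto simp: fst_f Un_commute)
  have open_sub_fst: "open_sub (a r) \<subseteq> fst g r" for r
    using coS_pc_lower[OF hom_IR_sublocale_fst[OF g_hom] hull_fst[of r]] by (simp add: coS_pc_closed_sub)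
  have "fst g r = UNIV" for r
  proof -
    have "open_sub (a t) \<subseteq> fst g r" for t
    proof (cases "t \<le> r")
      case True
      then show ?thesis using open_sub_fst[of t] hom_IR_fst_mono[OF g_hom True] by blast
    next
      case False
      then have "open_sub (a t) \<subseteq> open_sub (a r)" by (intro open_sub_mono lsc_antimono) simp
      then show ?thesis using open_sub_fst[of r] by blast
    qed
    then have "sublocale_hull (\<Union>t. open_sub (a t)) \<subseteq> fst g r"
      by (intro sublocale_hull_least hom_IR_sublocale_fst[OF g_hom]) blast
    then show ?thesis using sublocale_hull_UN_open_sub[of a UNIV] l2 by blast
  qed
  then show ?thesis by (rule Fbar_eq_minus_inf[OF g])
qed

lemma lsc_is_Fmeet_open_sub:
  assumes a_le: "\<And>r. a r \<le> b"
  shows "is_Fmeet f (\<lambda>_. open_sub b, \<lambda>_. coS_pc (open_sub b)) minus_inf"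
  unfolding is_Fmeet_def
proof (intro conjI ballI impI)
  show "(minus_inf :: 'a rfun) \<in> Fbar" by (rule minus_inf_in_Fbar)
  show "Fle minus_inf f" by (rule Fle_minus_inf[OF hom_R_hom_IR[OF f]])
  show "Fle minus_inf (\<lambda>_::rat. open_sub b, \<lambda>_::rat. coS_pc (open_sub b))"
    by (rule Fle_minus_inf[OF Fbar_hom_IR[OF const_open_sub_in_Fbar]])
  fix k assume k: "k \<in> Fbar" and below: "Fle k f \<and> Fle k (\<lambda>_. open_sub b, \<lambda>_. coS_pc (open_sub b))"
  have "fst k r = UNIV" for r
  proof -
    have "closed_sub (a r) \<union> open_sub b \<subseteq> fst k r"
      using below by (auto simp: Fle_iff fst_f)
    then have "sublocale_hull (closed_sub (a r) \<union> open_sub b) \<subseteq> fst k r"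
      by (rule sublocale_hull_least[OF _ hom_IR_sublocale_fst[OF Fbar_hom_IR[OF k]]])
    moreover have "sublocale_hull (closed_sub (a r) \<union> open_sub b) = UNIV"
      by (rule sublocale_hull_closed_sub_Un_open_sub[OF a_le])
    ultimately show ?thesis by blast
  qed
  then show "Fle k minus_inf" using Fbar_eq_minus_inf[OF k] by simp
qed

lemma lsc_is_Fjoin_coS_pc:
  assumes V: "is_sublocale V" and V_le: "\<And>s. V \<subseteq> open_sub (a s)"
  shows "is_Fjoin f (\<lambda>_. coS_pc (coS_pc V), \<lambda>_. coS_pc V) plus_inf"
  unfolding is_Fjoin_def
proof (intro conjI ballI impI)
  show "(plus_inf :: 'a rfun) \<in> Fbar" by (rule plus_inf_in_Fbar)
  show "Fle f plus_inf" by (rule Fle_plus_inf[OF hom_R_hom_IR[OF f]])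
  show "Fle (\<lambda>_::rat. coS_pc (coS_pc V), \<lambda>_::rat. coS_pc V) plus_inf"
    by (rule Fle_plus_inf[OF Fbar_hom_IR[OF const_coS_pc_in_Fbar[OF V]]])
  fix k assume k: "k \<in> Fbar" and above: "Fle f k \<and> Fle (\<lambda>_. coS_pc (coS_pc V), \<lambda>_. coS_pc V) k"
  have "snd k s = UNIV" for s
  proof -
    have "snd f s \<subseteq> snd k s" "coS_pc V \<subseteq> snd k s"
      using above by (simp_all add: Fle_iff)
    then have "V \<union> coS_pc V \<subseteq> snd k s"
      using V_le[of s] lsc_open_sub_subset_snd[of s] by blast
    then have "sublocale_hull (V \<union> coS_pc V) \<subseteq> snd k s"
      by (rule sublocale_hull_least[OF _ hom_IR_sublocale_snd[OF Fbar_hom_IR[OF k]]])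
    then show ?thesis using sublocale_hull_Un_coS_pc[OF V] by blast
  qed
  then show "Fle plus_inf k" using Fbar_eq_plus_inf[OF k] by simp
qed

lemma Freal_lsc_Sup_eq_top:
  assumes "f \<in> Freal"
  shows "Sup (range a) = top"
proof -
  let ?b = "Sup (range a)"
  have "is_Fmeet f (\<lambda>_. open_sub ?b, \<lambda>_. coS_pc (open_sub ?b)) minus_inf"
    by (rule lsc_is_Fmeet_open_sub) (simp add: Sup_upper)
  then have "(\<lambda>_::rat. open_sub ?b, \<lambda>_::rat. coS_pc (open_sub ?b)) = minus_inf"
    using assms const_open_sub_in_Fbar unfolding Freal_def by blast
  then have "closed_sub ?b = {top}"
    by (simp add: coS_pc_open_sub minus_inf_def coS_top_def prod_eq_iff fun_eq_iff)
  then show ?thesis by (simp add: closed_sub_eq_top_iff)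
qed

lemma Freal_lsc_hull_eq_UNIV:
  assumes "f \<in> Freal"
  shows "sublocale_hull (\<Union>(range (fst f))) = UNIV"
proof -
  let ?F = "sublocale_hull (\<Union>(range (fst f)))"
  define V where "V = (\<Inter>r. open_sub (a r))"
  have V: "is_sublocale V" unfolding V_def by (rule sublocale_Inter) (auto simp: sublocale_open_sub)
  have "is_Fjoin f (\<lambda>_. coS_pc (coS_pc V), \<lambda>_. coS_pc V) plus_inf"
    by (rule lsc_is_Fjoin_coS_pc[OF V]) (auto simp: V_def)
  then have "(\<lambda>_::rat. coS_pc (coS_pc V), \<lambda>_::rat. coS_pc V) = plus_inf"
    using assms const_coS_pc_in_Fbar[OF V] unfolding Freal_def by blast
  then have pc_V: "coS_pc V = UNIV"
    by (simp add: plus_inf_def coS_bot_def prod_eq_iff fun_eq_iff)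
  have "sublocale_hull (closed_sub (a r) \<union> open_sub (a r)) \<subseteq> sublocale_hull (?F \<union> open_sub (a r))" for r
    using sublocale_hull_upper[of "\<Union>(range (fst f))"]
    by (intro sublocale_hull_mono) (auto simp: fst_f[symmetric])
  then have "(\<Inter>r. sublocale_hull (?F \<union> open_sub (a r))) = UNIV"
    using sublocale_hull_closed_sub_Un_open_sub[OF order.refl] by blast
  moreover have "sublocale_hull (?F \<union> V) = (\<Inter>r. sublocale_hull (?F \<union> open_sub (a r)))"
    unfolding V_def
    by (rule sublocale_hull_Un_INT) (simp_all add: sublocale_sublocale_hull sublocale_open_sub)
  ultimately have "coS_pc V \<subseteq> ?F"
    by (intro coS_pc_lower sublocale_sublocale_hull) simp
  then show ?thesis using pc_V by blast
qed

lemma Freal_iff_lsc: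
  "f \<in> Freal \<longleftrightarrow> Sup (range a) = top \<and> sublocale_hull (\<Union>(range (fst f))) = UNIV"
proof
  assume "f \<in> Freal"
  then show "Sup (range a) = top \<and> sublocale_hull (\<Union>(range (fst f))) = UNIV"
    by (simp add: Freal_lsc_Sup_eq_top Freal_lsc_hull_eq_UNIV)
next
  assume "Sup (range a) = top \<and> sublocale_hull (\<Union>(range (fst f))) = UNIV"
  then show "f \<in> Freal"
    unfolding Freal_def using lsc_in_Fbar lsc_join_plus_inf lsc_meet_minus_inf by blast
qed

end

lemma LSC_eq_Freal_Int_LSCbar: "(LSC :: 'a rfun set) = Freal \<inter> LSCbar"
proof (intro set_eqI)
  fix f :: "'a rfun"
  show "f \<in> LSC \<longleftrightarrow> f \<in> Freal \<inter> LSCbar"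
  proof (cases "f \<in> LSCbar")
    case False
    then show ?thesis by (auto simp: LSC_def LSCbar_def)
  next
    case True
    then have f: "hom_R f" and "\<forall>r. \<exists>c. fst f r = closed_sub c"
      by (simp_all add: LSCbar_def is_closed_sub_def)
    then obtain a where fst_f: "\<And>r. fst f r = closed_sub (a r)"
      by (metis choice_iff)
    have "range (fst f) = range (\<lambda>r. closed_sub (a r))"
      using fst_f by auto
    then have "coS_Sup (range (fst f)) = coS_top \<longleftrightarrow> Sup (range a) = top"
      by (simp add: coS_Sup_def coS_top_def closed_sub_INT closed_sub_eq_top_iff)
    then show ?thesis
      using True Freal_iff_lsc[OF f fst_f]
      by (auto simp: LSC_def LSCbar_def coS_Inf_eq coS_bot_def)
  qed
qed

lemma USC_eq_Freal_Int_USCbar: "(USC :: 'a rfun set) = Freal \<inter> USCbar"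
proof (intro set_eqI)
  fix f :: "'a rfun"
  have "f \<in> USC \<longleftrightarrow> negate f \<in> LSC" by simp
  also have "\<dots> \<longleftrightarrow> negate f \<in> Freal \<inter> LSCbar" by (simp only: LSC_eq_Freal_Int_LSCbar)
  also have "\<dots> \<longleftrightarrow> f \<in> Freal \<inter> USCbar" by simp
  finally show "f \<in> USC \<longleftrightarrow> f \<in> Freal \<inter> USCbar" .
qed

end

theorem proposition5p5:
  assumes "is_frame TYPE('a::complete_lattice)"
  shows "(LSC :: 'a rfun set) = Freal \<inter> LSCbar \<and> (USC :: 'a rfun set) = Freal \<inter> USCbar"
proof -
  interpret frame "TYPE('a)" by unfold_locales (rule assms)
  show ?thesis using LSC_eq_Freal_Int_LSCbar USC_eq_Freal_Int_USCbar by blast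
qed

end
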